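(* Let $X$ be a finite $T_0$ topological space, $\mathcal V$ a multivector field on $X$ with $X$ invariant, and $\mathcal M=\{M_p\mid p\in\mathbb P\}$ a Morse predecomposition of $X$. Let $C\subset X$ be an isolated invariant set which is strongly connected in $G_{\mathcal V}$. If there is $r\in\mathbb P_C$ such that $M_r$ is saturated in $X$, then $C\subset M_r$; in particular $\mathbb P_C=\{r\}$.
   Context: Notation: $\operatorname{cl}$ is closure; $A\subset X$ is locally closed if $\operatorname{cl}A\setminus A$ is closed. A multivector field $\mathcal V$ on $X$ is a partition of $X$ into locally closed sets (multivectors); $[x]_{\mathcal V}$ is the multivector containing $x$. A multivector $V$ is critical if $H(\operatorname{cl}V,\operatorname{cl}V\setminus V)$ (relative singular homology) is nontrivial, regular otherwise. $A$ is $\mathcal V$-compatible if it is a union of multivectors; $\langle A\rangle_{\mathcal V}$ is the smallest locally closed $\mathcal V$-compatible set containing $A$. $\Pi_{\mathcal V}(x)=\operatorname{cl}\{x\}\cup[x]_{\mathcal V}$; $G_{\mathcal V}$ is the digraph on $X$ with an edge $x\to y$ iff $y\in\Pi_{\mathcal V}(x)$; a set $A$ is strongly connected in $G_{\mathcal V}$ if for all $v,w\in A$ there is a walk of positive length from $v$ to $w$ with all vertices in $A$. A solution is a partial map $\gamma:\mathbb Z\nrightarrow X$ with domain an integer interval and $\gamma(t+1)\in\Pi_{\mathcal V}(\gamma(t))$; a path has finite domain; a full solution has domain $\mathbb Z$. $\alpha(\gamma)=\langle\bigcap_{t\le0}\gamma((-\infty,t])\rangle_{\mathcal V}$, $\omega(\gamma)=\langle\bigcap_{t\ge0}\gamma([t,\infty))\rangle_{\mathcal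 V}$. A full solution is essential unless $\alpha(\gamma)$ or $\omega(\gamma)$ lies in a single regular multivector; an essential solution in $A$ has image in $A$. $\operatorname{Inv}S$ is the set of $x\in S$ with an essential solution $\gamma$ in $S$, $\gamma(0)=x$; $S$ is invariant if $\operatorname{Inv}S=S$. An invariant $S$ is isolated invariant if there is a closed $N\supset\Pi_{\mathcal V}(S)$ such that every path in $N$ with endpoints in $S$ has image in $S$. A link from $S_1$ to $S_2$ is a full solution with $\alpha(\gamma)\cap S_1\ne\emptyset\ne\omega(\gamma)\cap S_2$. A Morse predecomposition of $X$ is an indexed family $\{M_p\mid p\in\mathbb P\}$ of mutually disjoint isolated invariant subsets such that every essential solution in $X$ is a link from some $M_p$ to some $M_q$. $\mathbb P_C=\{p\in\mathbb P\mid M_p\cap C\ne\emptyset\}$. An invariant $T\subset X$ is saturated in $X$ if every essential solution $\gamma$ in $X$ with $\alpha(\gamma)\subset T$ and $\omega(\gamma)\subset T$ has $\operatorname{im}\gamma\subset T$. *)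

theory Defs
  imports "HOL-Analysis.Analysis" "HOL-Homology.Homology"
begin

definition locally_closed :: "'a topology \<Rightarrow> 'a set \<Rightarrow> bool" where
  "locally_closed T A \<longleftrightarrow> A \<subseteq> topspace T \<and> closedin T (T closure_of A - A)"

definition multivector_field :: "'a topology \<Rightarrow> 'a set set \<Rightarrow> bool" where
  "multivector_field T V \<longleftrightarrow>
     (\<forall>v\<in>V. v \<noteq> {} \<and> locally_closed T v) \<and>
     \<Union>V = topspace T \<and>
     (\<forall>v\<in>V. \<forall>w\<in>V. v \<noteq> w \<longrightarrow> v \<inter> w = {})"

definition mv :: "'a set set \<Rightarrow> 'a \<Rightarrow> 'a set" where
  "mv V x = (THE v. v \<in> V \<and> x \<in> v)"

definition critical :: "'a topology \<Rightarrow> 'a set \<Rightarrow> bool" where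
  "critical T v \<longleftrightarrow>
     (\<exists>p. \<not> trivial_group
            (relative_homology_group p (subtopology T (T closure_of v)) (T closure_of v - v)))"

definition regular :: "'a topology \<Rightarrow> 'a set \<Rightarrow> bool" where
  "regular T v \<longleftrightarrow> \<not> critical T v"

definition compatible :: "'a set set \<Rightarrow> 'a set \<Rightarrow> bool" where
  "compatible V A \<longleftrightarrow> (\<exists>W. W \<subseteq> V \<and> A = \<Union>W)"

definition lc_hull :: "'a topology \<Rightarrow> 'a set set \<Rightarrow> 'a set \<Rightarrow> 'a set" where
  "lc_hull T V A = \<Inter>{B. A \<subseteq> B \<and> locally_closed T B \<and> compatible V B}"

definition Pi_mv :: "'a topology \<Rightarrow> 'a set set \<Rightarrow> 'a \<Rightarrow> 'a set" where
  "Pi_mv T V x = T closure_of {x} \<union> mv V x"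

definition full_solution :: "'a topology \<Rightarrow> 'a set set \<Rightarrow> (int \<Rightarrow> 'a) \<Rightarrow> bool" where
  "full_solution T V \<gamma> \<longleftrightarrow>
     (\<forall>t. \<gamma> t \<in> topspace T \<and> \<gamma> (t + 1) \<in> Pi_mv T V (\<gamma> t))"

definition is_path :: "'a topology \<Rightarrow> 'a set set \<Rightarrow> int \<Rightarrow> int \<Rightarrow> (int \<Rightarrow> 'a) \<Rightarrow> bool" where
  "is_path T V a b \<gamma> \<longleftrightarrow> a \<le> b \<and>
     (\<forall>t\<in>{a..b}. \<gamma> t \<in> topspace T) \<and>
     (\<forall>t\<in>{a..<b}. \<gamma> (t + 1) \<in> Pi_mv T V (\<gamma> t))"

definition alpha_lim :: "'a topology \<Rightarrow> 'a set set \<Rightarrow> (int \<Rightarrow> 'a) \<Rightarrow> 'a set" where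
  "alpha_lim T V \<gamma> = lc_hull T V (\<Inter>t\<in>{..0}. \<gamma> ` {..t})"

definition omega_lim :: "'a topology \<Rightarrow> 'a set set \<Rightarrow> (int \<Rightarrow> 'a) \<Rightarrow> 'a set" where
  "omega_lim T V \<gamma> = lc_hull T V (\<Inter>t\<in>{0..}. \<gamma> ` {t..})"

definition essential :: "'a topology \<Rightarrow> 'a set set \<Rightarrow> (int \<Rightarrow> 'a) \<Rightarrow> bool" where
  "essential T V \<gamma> \<longleftrightarrow> full_solution T V \<gamma> \<and>
     \<not> (\<exists>v\<in>V. regular T v \<and> alpha_lim T V \<gamma> \<subseteq> v) \<and>
     \<not> (\<exists>v\<in>V. regular T v \<and> omega_lim T V \<gamma> \<subseteq> v)"

definition Inv :: "'a topology \<Rightarrow> 'a set set \<Rightarrow> 'a set \<Rightarrow> 'a set" where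
  "Inv T V S = {x\<in>S. \<exists>\<gamma>. essential T V \<gamma> \<and> range \<gamma> \<subseteq> S \<and> \<gamma> 0 = x}"

definition invariant :: "'a topology \<Rightarrow> 'a set set \<Rightarrow> 'a set \<Rightarrow> bool" where
  "invariant T V S \<longleftrightarrow> Inv T V S = S"

definition isolated_invariant :: "'a topology \<Rightarrow> 'a set set \<Rightarrow> 'a set \<Rightarrow> bool" where
  "isolated_invariant T V S \<longleftrightarrow> invariant T V S \<and>
     (\<exists>N. closedin T N \<and> (\<Union>x\<in>S. Pi_mv T V x) \<subseteq> N \<and>
          (\<forall>a b \<gamma>. is_path T V a b \<gamma> \<and> \<gamma> ` {a..b} \<subseteq> N \<and> \<gamma> a \<in> S \<and> \<gamma> b \<in> S
                \<longrightarrow> \<gamma> ` {a..b} \<subseteq> S))"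

text \<open>Strong connectedness of A in the digraph G_V (edge x \<rightarrow> y iff y \<in> Pi(x))\<close>
definition strongly_connected_G :: "'a topology \<Rightarrow> 'a set set \<Rightarrow> 'a set \<Rightarrow> bool" where
  "strongly_connected_G T V A \<longleftrightarrow>
     (\<forall>v\<in>A. \<forall>w\<in>A. \<exists>a b \<gamma>. a < b \<and> is_path T V a b \<gamma> \<and> \<gamma> a = v \<and> \<gamma> b = w \<and>
                            \<gamma> ` {a..b} \<subseteq> A)"

definition is_link :: "'a topology \<Rightarrow> 'a set set \<Rightarrow> 'a set \<Rightarrow> 'a set \<Rightarrow> (int \<Rightarrow> 'a) \<Rightarrow> bool" where
  "is_link T V S1 S2 \<gamma> \<longleftrightarrow> full_solution T V \<gamma> \<and>
     alpha_lim T V \<gamma> \<inter> S1 \<noteq> {} \<and> omega_lim T V \<gamma> \<inter> S2 \<noteq> {}"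

definition morse_predecomposition ::
    "'a topology \<Rightarrow> 'a set set \<Rightarrow> 'p set \<Rightarrow> ('p \<Rightarrow> 'a set) \<Rightarrow> bool" where
  "morse_predecomposition T V P M \<longleftrightarrow>
     (\<forall>p\<in>P. isolated_invariant T V (M p) \<and> M p \<subseteq> topspace T) \<and>
     (\<forall>p\<in>P. \<forall>q\<in>P. p \<noteq> q \<longrightarrow> M p \<inter> M q = {}) \<and>
     (\<forall>\<gamma>. essential T V \<gamma> \<and> range \<gamma> \<subseteq> topspace T \<longrightarrow>
          (\<exists>p\<in>P. \<exists>q\<in>P. is_link T V (M p) (M q) \<gamma>))"

definition P_of :: "'p set \<Rightarrow> ('p \<Rightarrow> 'a set) \<Rightarrow> 'a set \<Rightarrow> 'p set" where
  "P_of P M C = {p\<in>P. M p \<inter> C \<noteq> {}}"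

definition saturated :: "'a topology \<Rightarrow> 'a set set \<Rightarrow> 'a set \<Rightarrow> bool" where
  "saturated T V S \<longleftrightarrow> invariant T V S \<and> S \<subseteq> topspace T \<and>
     (\<forall>\<gamma>. essential T V \<gamma> \<and> range \<gamma> \<subseteq> topspace T \<and>
          alpha_lim T V \<gamma> \<subseteq> S \<and> omega_lim T V \<gamma> \<subseteq> S \<longrightarrow> range \<gamma> \<subseteq> S)"

end

theory Submission
  imports Defs
begin

text \<open>Pick \<open>x \<in> C \<inter> M\<^sub>r\<close> and an essential solution \<open>\<phi>\<close> through \<open>x\<close> inside the invariant set
  \<open>M\<^sub>r\<close>. For \<open>y \<in> C\<close>, strong connectedness yields a loop from \<open>x\<close> through \<open>y\<close> back to \<open>x\<close>;
  inserting it into \<open>\<phi>\<close> at time 0 gives an essential solution with the same \<open>\<alpha>\<close>- and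
  \<open>\<omega>\<close>-limit sets as \<open>\<phi>\<close>. Both lie in \<open>M\<^sub>r\<close>, because \<open>M\<^sub>r\<close> is isolated invariant and hence
  locally closed and \<open>\<V>\<close>-compatible, so saturation forces the new solution, and with it
  \<open>y\<close>, into \<open>M\<^sub>r\<close>. Disjointness of the Morse sets then gives \<open>\<bbbP>\<^sub>C = {r}\<close>.\<close>

lemma mv_unique:
  assumes "multivector_field T V" "v \<in> V" "x \<in> v"
  shows "mv V x = v"
  unfolding mv_def
proof (rule the_equality)
  show "\<And>w. w \<in> V \<and> x \<in> w \<Longrightarrow> w = v"
    using assms unfolding multivector_field_def by blast
qed (use assms in blast)

lemma mv_in_field_and_mem:
  assumes "multivector_field T V" "x \<in> topspace T"
  shows "mv V x \<in> V" "x \<in> mv V x"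
proof -
  obtain v where "v \<in> V" "x \<in> v"
    using assms unfolding multivector_field_def by blast
  then show "mv V x \<in> V" "x \<in> mv V x"
    using mv_unique[OF assms(1)] by auto
qed

lemma mv_eq_mv_of_mem:
  assumes "multivector_field T V" "x \<in> topspace T" "y \<in> mv V x"
  shows "mv V y = mv V x"
  using mv_unique mv_in_field_and_mem assms by metis

lemma mv_subset_topspace:
  assumes "multivector_field T V" "x \<in> topspace T"
  shows "mv V x \<subseteq> topspace T"
  using assms mv_in_field_and_mem(1)[OF assms]
  unfolding multivector_field_def locally_closed_def by blast

lemma Pi_mv_subset_topspace:
  assumes "multivector_field T V" "x \<in> topspace T"
  shows "Pi_mv T V x \<subseteq> topspace T"
  using mv_subset_topspace[OF assms] closure_of_subset_topspace[of T "{x}"]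
  unfolding Pi_mv_def by blast

lemma mem_Pi_mv_self:
  assumes "x \<in> topspace T"
  shows "x \<in> Pi_mv T V x"
  using closure_of_subset[of "{x}" T] assms unfolding Pi_mv_def by auto

lemma mem_closure_of_finite_imp_point:
  assumes "finite A" "z \<in> X closure_of A"
  shows "\<exists>a\<in>A. z \<in> X closure_of {a}"
  using assms closure_of_Union[of "(\<lambda>a. {a}) ` A" X] by auto

subsection \<open>Isolated invariant sets\<close>

lemma isolated_invariant_two_step_path:
  assumes mvf: "multivector_field T V" and iso: "isolated_invariant T V S"
    and S: "S \<subseteq> topspace T" "s \<in> S" "z \<in> S"
    and steps: "w \<in> Pi_mv T V s" "z \<in> Pi_mv T V w"
  shows "w \<in> S"
proof -
  obtain N where N: "closedin T N" "(\<Union>x\<in>S. Pi_mv T V x) \<subseteq> N"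
    and isolating: "\<And>a b \<gamma>. is_path T V a b \<gamma> \<and> \<gamma> ` {a..b} \<subseteq> N \<and> \<gamma> a \<in> S \<and> \<gamma> b \<in> S
                     \<Longrightarrow> \<gamma> ` {a..b} \<subseteq> S"
    using iso unfolding isolated_invariant_def by blast
  have "x \<in> N" if "x \<in> S" for x
    using that S(1) N(2) mem_Pi_mv_self[of x T V] by blast
  then have "s \<in> N" "z \<in> N"
    using S by blast+
  have "w \<in> N"
    using N(2) S(2) steps(1) by blast
  have "w \<in> topspace T"
    using Pi_mv_subset_topspace[OF mvf S(1)[THEN subsetD, OF S(2)]] steps(1) by blast
  define \<gamma> where "\<gamma> = (\<lambda>t::int. if t = 0 then s else if t = 1 then w else z)"
  have "{0..2::int} = {0, 1, 2}" "{0..<2::int} = {0, 1}"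
    by auto
  then have "is_path T V 0 2 \<gamma> \<and> \<gamma> ` {0..2} \<subseteq> N \<and> \<gamma> 0 \<in> S \<and> \<gamma> 2 \<in> S"
    unfolding is_path_def using S steps \<open>w \<in> topspace T\<close> \<open>s \<in> N\<close> \<open>z \<in> N\<close> \<open>w \<in> N\<close>
    by (auto simp: \<gamma>_def)
  then have "\<gamma> ` {0..2} \<subseteq> S"
    by (rule isolating)
  then have "\<gamma> 1 \<in> S"
    by auto
  then show "w \<in> S"
    by (simp add: \<gamma>_def)
qed

lemma isolated_invariant_compatible:
  assumes mvf: "multivector_field T V" and iso: "isolated_invariant T V S"
    and S: "S \<subseteq> topspace T"
  shows "compatible V S"
proof -
  have mv_subset: "mv V x \<subseteq> S" if "x \<in> S" for x
  proof
    fix y assume y: "y \<in> mv V x"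
    have x_top: "x \<in> topspace T"
      using that S by blast
    have "x \<in> Pi_mv T V y"
      using mv_eq_mv_of_mem[OF mvf x_top y] mv_in_field_and_mem(2)[OF mvf x_top]
      unfolding Pi_mv_def by simp
    moreover have "y \<in> Pi_mv T V x"
      using y unfolding Pi_mv_def by blast
    ultimately show "y \<in> S"
      using isolated_invariant_two_step_path[OF mvf iso S that that] by blast
  qed
  have "x \<in> \<Union>{v\<in>V. v \<subseteq> S}" if "x \<in> S" for x
    using mv_subset[OF that] mv_in_field_and_mem[of T V x] mvf that S by blast
  then have "S = \<Union>{v\<in>V. v \<subseteq> S}"
    by blast
  then show ?thesis
    unfolding compatible_def by (intro exI[of _ "{v\<in>V. v \<subseteq> S}"]) simp
qed

lemma isolated_invariant_locally_closed:
  assumes fin: "finite (topspace T)" and mvf: "multivector_field T V"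
    and iso: "isolated_invariant T V S" and S: "S \<subseteq> topspace T"
  shows "locally_closed T S"
proof -
  let ?D = "T closure_of S - S"
  have D_top: "?D \<subseteq> topspace T"
    using closure_of_subset_topspace[of T S] by blast
  have "T closure_of ?D \<subseteq> ?D"
  proof
    fix z assume z: "z \<in> T closure_of ?D"
    then have "z \<in> T closure_of S"
      using closure_of_mono[of ?D "T closure_of S" T] by auto
    moreover have "z \<notin> S"
    proof
      assume "z \<in> S"
      have "finite ?D" "finite S"
        using D_top S fin finite_subset by blast+
      obtain w where w: "w \<in> ?D" "z \<in> T closure_of {w}"
        using mem_closure_of_finite_imp_point[OF \<open>finite ?D\<close> z] by blast
      obtain s where s: "s \<in> S" "w \<in> T closure_of {s}"
        using mem_closure_of_finite_imp_point[OF \<open>finite S\<close>] w(1) by blast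
      have "w \<in> S"
        using isolated_invariant_two_step_path[OF mvf iso S s(1) \<open>z \<in> S\<close>] s(2) w(2)
        unfolding Pi_mv_def by blast
      then show False
        using w(1) by blast
    qed
    ultimately show "z \<in> ?D"
      by blast
  qed
  then show ?thesis
    unfolding locally_closed_def using S D_top closure_of_subset_eq by blast
qed

lemma lc_hull_least:
  assumes "A \<subseteq> S" "locally_closed T S" "compatible V S"
  shows "lc_hull T V A \<subseteq> S"
  unfolding lc_hull_def using assms by (intro Inter_lower) simp

lemma limit_sets_subset:
  assumes "range \<gamma> \<subseteq> S" "locally_closed T S" "compatible V S"
  shows "alpha_lim T V \<gamma> \<subseteq> S" "omega_lim T V \<gamma> \<subseteq> S"
  unfolding alpha_lim_def omega_lim_def
  by (rule lc_hull_least; use assms in blast)+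

lemma alpha_lim_cong:
  assumes "\<And>t. t \<le> 0 \<Longrightarrow> g t = f t"
  shows "alpha_lim T V g = alpha_lim T V f"
proof -
  have "(\<Inter>t\<in>{..0}. g ` {..t}) = (\<Inter>t\<in>{..0}. f ` {..t})"
    using assms by (intro INF_cong image_cong) auto
  then show ?thesis
    unfolding alpha_lim_def by simp
qed

lemma mem_omega_tails_iff_frequently:
  fixes f :: "int \<Rightarrow> 'a"
  shows "z \<in> (\<Inter>t\<in>{0..}. f ` {t..}) \<longleftrightarrow> (\<forall>t. \<exists>s\<ge>t. f s = z)"
proof
  assume z: "z \<in> (\<Inter>t\<in>{0..}. f ` {t..})"
  show "\<forall>t. \<exists>s\<ge>t. f s = z"
  proof
    fix t :: int
    have "z \<in> f ` {max t 0..}"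
      using z by auto
    then show "\<exists>s\<ge>t. f s = z"
      by force
  qed
qed fastforce

lemma omega_lim_shift:
  fixes f g :: "int \<Rightarrow> 'a"
  assumes shift: "\<And>t. t \<ge> K \<Longrightarrow> g t = f (t - K)"
  shows "omega_lim T V g = omega_lim T V f"
proof -
  have freq_iff: "(\<forall>t. \<exists>s\<ge>t. g s = z) \<longleftrightarrow> (\<forall>t. \<exists>s\<ge>t. f s = z)" for z
  proof
    assume freq: "\<forall>t. \<exists>s\<ge>t. g s = z"
    show "\<forall>t. \<exists>s\<ge>t. f s = z"
    proof
      fix t
      obtain s where "s \<ge> max (t + K) K" "g s = z"
        using freq by blast
      then show "\<exists>s\<ge>t. f s = z"
        using shift[of s] by (intro exI[of _ "s - K"]) simp
    qed
  next
    assume freq: "\<forall>t. \<exists>s\<ge>t. f s = z"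
    show "\<forall>t. \<exists>s\<ge>t. g s = z"
    proof
      fix t
      obtain s where "s \<ge> max (t - K) 0" "f s = z"
        using freq by blast
      then show "\<exists>s\<ge>t. g s = z"
        using shift[of "s + K"] by (intro exI[of _ "s + K"]) simp
    qed
  qed
  have "(\<Inter>t\<in>{0..}. g ` {t..}) = (\<Inter>t\<in>{0..}. f ` {t..})"
    using freq_iff unfolding set_eq_iff mem_omega_tails_iff_frequently by blast
  then show ?thesis
    unfolding omega_lim_def by simp
qed

subsection \<open>Inserting a loop into a solution\<close>

lemma is_path_shift:
  assumes "is_path T V a b p"
  shows "is_path T V (a - k) (b - k) (\<lambda>t. p (t + k))"
proof -
  have "p (t + k) \<in> topspace T" if "t \<in> {a - k..b - k}" for t
    using assms that unfolding is_path_def by auto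
  moreover have "p (t + 1 + k) \<in> Pi_mv T V (p (t + k))" if "t \<in> {a - k..<b - k}" for t
  proof -
    have "t + k \<in> {a..<b}"
      using that by auto
    then have "p (t + k + 1) \<in> Pi_mv T V (p (t + k))"
      using assms unfolding is_path_def by blast
    then show ?thesis
      by (simp add: ac_simps)
  qed
  ultimately show ?thesis
    using assms unfolding is_path_def by simp
qed

lemma is_path_append:
  assumes p: "is_path T V a b p" and q: "is_path T V b c q" and "p b = q b"
  shows "is_path T V a c (\<lambda>t. if t \<le> b then p t else q t)"
proof -
  have "(if t + 1 \<le> b then p (t + 1) else q (t + 1)) \<in> Pi_mv T V (if t \<le> b then p t else q t)"
    if "t \<in> {a..<c}" for t
  proof (cases "t < b")
    case True
    then show ?thesis
      using p that unfolding is_path_def by auto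
  next
    case False
    then show ?thesis
      using q that \<open>p b = q b\<close> unfolding is_path_def by auto
  qed
  then show ?thesis
    using p q unfolding is_path_def by auto
qed

lemma strongly_connected_G_loop:
  assumes "strongly_connected_G T V C" "x \<in> C" "y \<in> C"
  obtains n p where "is_path T V 0 n p" "p 0 = x" "p n = x" "y \<in> p ` {0..n}"
proof -
  have connect: "\<exists>a b \<gamma>. a < b \<and> is_path T V a b \<gamma> \<and> \<gamma> a = v \<and> \<gamma> b = w \<and> \<gamma> ` {a..b} \<subseteq> C"
    if "v \<in> C" "w \<in> C" for v w
    using assms(1) that unfolding strongly_connected_G_def by blast
  obtain a1 b1 p1 where p1: "is_path T V a1 b1 p1" "p1 a1 = x" "p1 b1 = y"
    using connect[OF assms(2,3)] by blast
  obtain a2 b2 p2 where p2: "a2 < b2" "is_path T V a2 b2 p2" "p2 a2 = y" "p2 b2 = x"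
    using connect[OF assms(3,2)] by blast
  define m where "m = b1 - a1"
  define n where "n = m + (b2 - a2)"
  define p where "p = (\<lambda>t. if t \<le> m then p1 (t + a1) else p2 (t + (a2 - m)))"
  have "is_path T V 0 m (\<lambda>t. p1 (t + a1))"
    using is_path_shift[OF p1(1), of a1] unfolding m_def by simp
  moreover have "is_path T V m n (\<lambda>t. p2 (t + (a2 - m)))"
    using is_path_shift[OF p2(2), of "a2 - m"] unfolding n_def by (simp add: algebra_simps)
  ultimately have "is_path T V 0 n p"
    unfolding p_def by (rule is_path_append) (simp add: m_def p1(3) p2(3))
  moreover have "0 \<le> m" "m < n"
    using p1(1) p2(1) unfolding is_path_def m_def n_def by simp_all
  moreover have "p 0 = x" "p m = y" "p n = x"
    using p1(2,3) p2(4) \<open>0 \<le> m\<close> \<open>m < n\<close> by (simp_all add: p_def m_def n_def)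
  moreover have "y \<in> p ` {0..n}"
    using \<open>p m = y\<close> \<open>0 \<le> m\<close> \<open>m < n\<close> by (intro rev_image_eqI[of m]) auto
  ultimately show ?thesis
    by (intro that) simp_all
qed

definition insert_loop :: "(int \<Rightarrow> 'a) \<Rightarrow> int \<Rightarrow> (int \<Rightarrow> 'a) \<Rightarrow> int \<Rightarrow> 'a" where
  "insert_loop \<phi> n p t = (if t \<le> 0 then \<phi> t else if t \<le> n then p t else \<phi> (t - n))"

lemma insert_loop_before:
  "t \<le> 0 \<Longrightarrow> insert_loop \<phi> n p t = \<phi> t"
  by (simp add: insert_loop_def)

lemma insert_loop_between:
  assumes "p 0 = \<phi> 0" "0 \<le> t" "t \<le> n"
  shows "insert_loop \<phi> n p t = p t"
proof (cases "t = 0")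
  case True
  then show ?thesis
    using assms(1) by (simp add: insert_loop_def)
qed (use assms in \<open>simp add: insert_loop_def\<close>)

lemma insert_loop_after:
  assumes "0 \<le> n" "n \<le> t" "p n = \<phi> 0"
  shows "insert_loop \<phi> n p t = \<phi> (t - n)"
proof (cases "t \<le> 0")
  case True
  then have "t = 0" "n = 0"
    using assms by auto
  then show ?thesis
    by (simp add: insert_loop_def)
qed (use assms in \<open>auto simp: insert_loop_def\<close>)

lemma full_solution_insert_loop:
  assumes \<phi>: "full_solution T V \<phi>" and p: "is_path T V 0 n p"
    and loop: "p 0 = \<phi> 0" "p n = \<phi> 0"
  shows "full_solution T V (insert_loop \<phi> n p)"
  unfolding full_solution_def
proof
  fix t :: int
  let ?g = "insert_loop \<phi> n p"
  have "0 \<le> n"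
    using p unfolding is_path_def by simp
  have "?g t \<in> topspace T"
    using \<phi> p unfolding full_solution_def is_path_def insert_loop_def by auto
  moreover have "?g (t + 1) \<in> Pi_mv T V (?g t)"
  proof -
    consider "t < 0" | "0 \<le> t" "t < n" | "n \<le> t"
      by linarith
    then show ?thesis
    proof cases
      case 1
      then show ?thesis
        using \<phi> unfolding full_solution_def by (simp add: insert_loop_before)
    next
      case 2
      then show ?thesis
        using p loop(1) unfolding is_path_def by (simp add: insert_loop_between)
    next
      case 3
      have "\<phi> (t - n + 1) \<in> Pi_mv T V (\<phi> (t - n))"
        using \<phi> unfolding full_solution_def by blast
      then show ?thesis
        using 3 \<open>0 \<le> n\<close> loop(2) by (simp add: insert_loop_after algebra_simps)
    qed
  qed
  ultimately show "?g t \<in> topspace T \<and> ?g (t + 1) \<in> Pi_mv T V (?g t)"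
    by blast
qed

lemma essential_insert_loop:
  assumes \<phi>: "essential T V \<phi>" and p: "is_path T V 0 n p"
    and loop: "p 0 = \<phi> 0" "p n = \<phi> 0"
  shows "essential T V (insert_loop \<phi> n p)"
    "alpha_lim T V (insert_loop \<phi> n p) = alpha_lim T V \<phi>"
    "omega_lim T V (insert_loop \<phi> n p) = omega_lim T V \<phi>"
proof -
  have "0 \<le> n"
    using p unfolding is_path_def by simp
  show alpha: "alpha_lim T V (insert_loop \<phi> n p) = alpha_lim T V \<phi>"
    by (rule alpha_lim_cong) (rule insert_loop_before)
  show omega: "omega_lim T V (insert_loop \<phi> n p) = omega_lim T V \<phi>"
    by (rule omega_lim_shift[of n]) (use \<open>0 \<le> n\<close> loop(2) in \<open>simp add: insert_loop_after\<close>)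
  show "essential T V (insert_loop \<phi> n p)"
  proof -
    have "full_solution T V \<phi>"
      using \<phi> unfolding essential_def by blast
    then have "full_solution T V (insert_loop \<phi> n p)"
      using p loop by (rule full_solution_insert_loop)
    then show ?thesis
      using \<phi> alpha omega by (simp add: essential_def)
  qed
qed

lemma strongly_connected_subset_saturated:
  assumes sat: "saturated T V S" and lc: "locally_closed T S" and cp: "compatible V S"
    and sc: "strongly_connected_G T V C" and "S \<inter> C \<noteq> {}"
  shows "C \<subseteq> S"
proof
  fix y assume "y \<in> C"
  obtain x where x: "x \<in> S" "x \<in> C"
    using \<open>S \<inter> C \<noteq> {}\<close> by blast
  obtain \<phi> where \<phi>: "essential T V \<phi>" "range \<phi> \<subseteq> S" "\<phi> 0 = x"
    using x sat unfolding saturated_def invariant_def Inv_def by blast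
  obtain n p where p: "is_path T V 0 n p" "p 0 = x" "p n = x" "y \<in> p ` {0..n}"
    using strongly_connected_G_loop[OF sc x(2) \<open>y \<in> C\<close>] .
  let ?g = "insert_loop \<phi> n p"
  have g: "essential T V ?g" "alpha_lim T V ?g \<subseteq> S" "omega_lim T V ?g \<subseteq> S"
    using essential_insert_loop[OF \<phi>(1) p(1)] limit_sets_subset[OF \<phi>(2) lc cp] p(2,3) \<phi>(3)
    by auto
  then have "range ?g \<subseteq> topspace T"
    unfolding essential_def full_solution_def by blast
  then have "range ?g \<subseteq> S"
    using sat g unfolding saturated_def by blast
  moreover have "y \<in> range ?g"
  proof -
    obtain t where "0 \<le> t" "t \<le> n" "y = p t"
      using p(4) by auto
    then have "y = ?g t"
      using insert_loop_between[of p \<phi> t n] p(2) \<phi>(3) by simp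
    then show ?thesis
      by simp
  qed
  ultimately show "y \<in> S"
    by blast
qed

theorem lemma4p10:
  fixes T :: "'a topology" and V :: "'a set set"
    and P :: "'p set" and M :: "'p \<Rightarrow> 'a set" and C :: "'a set" and r :: 'p
  assumes "finite (topspace T)"
    and "t0_space T"
    and "multivector_field T V"
    and "invariant T V (topspace T)"
    and "morse_predecomposition T V P M"
    and "isolated_invariant T V C"
    and "C \<subseteq> topspace T"
    and "strongly_connected_G T V C"
    and "r \<in> P_of P M C"
    and "saturated T V (M r)"
  shows "C \<subseteq> M r \<and> P_of P M C = {r}"
proof -
  have r: "r \<in> P" "M r \<inter> C \<noteq> {}"
    using assms(9) unfolding P_of_def by auto
  have iso: "isolated_invariant T V (M r)" "M r \<subseteq> topspace T"
    and disjoint: "\<And>p. p \<in> P \<Longrightarrow> p \<noteq> r \<Longrightarrow> M p \<inter> M r = {}"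
    using assms(5) r(1) unfolding morse_predecomposition_def by simp_all
  have "C \<subseteq> M r"
    using strongly_connected_subset_saturated[OF assms(10) _ _ assms(8) r(2)]
      isolated_invariant_locally_closed[OF assms(1,3) iso]
      isolated_invariant_compatible[OF assms(3) iso] by blast
  moreover have "P_of P M C = {r}"
    using \<open>C \<subseteq> M r\<close> disjoint assms(9) unfolding P_of_def by blast
  ultimately show ?thesis
    by blast
qed

end
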